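(* Let $F$ be the elementary cellular automaton with rule number 152. For every nonempty finite word $u\in\{0,1\}^*$, the deterministic communication complexity of $\textsc{SInv}_{F,u}$ restricted to inputs of length $n$ is bounded by a constant independent of $n$.
   Context: An elementary cellular automaton (ECA) with rule number $N\in\{0,\dots,255\}$ is the map $F:\{0,1\}^{\mathbb Z}\to\{0,1\}^{\mathbb Z}$ given by $F(x)_i=f(x_{i-1},x_i,x_{i+1})$. Here the local rule $f:\{0,1\}^3\to\{0,1\}$ is determined by $N=\sum_{a,b,c\in\{0,1\}}2^{4a+2b+c}f(a,b,c)$. For a nonempty finite word $u$, $p_u\in\{0,1\}^{\mathbb Z}$ is defined by $(p_u)_i=u_{i\bmod |u|}$. For a finite word $x$, $p_u[x]$ is the configuration equal to $x$ on positions $0,\dots,|x|-1$ and to $p_u$ elsewhere. $\textsc{SInv}_{F,u}$ is the decision problem: on input a finite word $x$, decide whether there is an integer $w$ such that for all $t\ge0$ the set of positions where $F^t(p_u)$ and $F^t(p_u[x])$ differ is contained in an interval of length $w$. For each $n$, it is regarded as a function $\{0,1\}^n\to\{0,1\}$. For a function $g:X\times Y\to Z$, $D(g)$ is the minimal depth of a deterministic two-party protocol computing $g$. In such a protocol, Alice knows $x$ and Bob knows $y$. The protocol is a binary tree: each internal node is labelled by a function of Alice's input only or of Bob's input only, with values in $\{\text{left},\text{right}\}$, and each leaf is labelled by an output value. For $g:\{0,1\}^m\to Z$, set $D(g)=\max_{0\le i<m}D(g_i)$, where $g_i:\{0,1\}^i\times\{0,1\}^{m-i}\to Z$ is $g_i(x,y)=g(xy)$.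 *)

theory Defs
  imports Main
begin

type_synonym config = "int \<Rightarrow> bool"

definition local_rule :: "nat \<Rightarrow> bool \<Rightarrow> bool \<Rightarrow> bool \<Rightarrow> bool" where
  "local_rule N a b c = bit N (4 * of_bool a + 2 * of_bool b + of_bool c)"

definition eca :: "nat \<Rightarrow> config \<Rightarrow> config" where
  "eca N x = (\<lambda>i. local_rule N (x (i - 1)) (x i) (x (i + 1)))"

definition per :: "bool list \<Rightarrow> config" where
  "per u = (\<lambda>i. u ! nat (i mod int (length u)))"

definition per_patch :: "bool list \<Rightarrow> bool list \<Rightarrow> config" where
  "per_patch u x = (\<lambda>i. if 0 \<le> i \<and> i < int (length x) then x ! nat i else per u i)"

definition SInv :: "nat \<Rightarrow> bool list \<Rightarrow> bool list \<Rightarrow> bool" where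
  "SInv N u x = (\<exists>w::int. \<forall>t::nat. \<exists>a::int.
      {i. (eca N ^^ t) (per u) i \<noteq> (eca N ^^ t) (per_patch u x) i} \<subseteq> {a..a + w})"

datatype ('a, 'b, 'z) protocol =
    Leaf 'z
  | AliceNode "'a \<Rightarrow> bool" "('a, 'b, 'z) protocol" "('a, 'b, 'z) protocol"
  | BobNode "'b \<Rightarrow> bool" "('a, 'b, 'z) protocol" "('a, 'b, 'z) protocol"

fun run :: "('a, 'b, 'z) protocol \<Rightarrow> 'a \<Rightarrow> 'b \<Rightarrow> 'z" where
  "run (Leaf z) x y = z"
| "run (AliceNode f l r) x y = (if f x then run r x y else run l x y)"
| "run (BobNode f l r) x y = (if f y then run r x y else run l x y)"

fun depth :: "('a, 'b, 'z) protocol \<Rightarrow> nat" where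
  "depth (Leaf z) = 0"
| "depth (AliceNode f l r) = Suc (max (depth l) (depth r))"
| "depth (BobNode f l r) = Suc (max (depth l) (depth r))"

definition comm_cc :: "'a set \<Rightarrow> 'b set \<Rightarrow> ('a \<Rightarrow> 'b \<Rightarrow> 'z) \<Rightarrow> nat" where
  "comm_cc X Y g = (LEAST d. \<exists>P :: ('a, 'b, 'z) protocol.
       depth P = d \<and> (\<forall>x\<in>X. \<forall>y\<in>Y. run P x y = g x y))"

definition words :: "nat \<Rightarrow> bool list set" where
  "words n = {w. length w = n}"

definition comm_cc_word :: "nat \<Rightarrow> (bool list \<Rightarrow> 'z) \<Rightarrow> nat" where
  "comm_cc_word m g = Max (insert 0
      ((\<lambda>i. comm_cc (words i) (words (m - i)) (\<lambda>x y. g (x @ y))) ` {..<m}))"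

end

theory Submission
  imports Defs
begin

(* Rule 152 maps x to 1 at i exactly when x(i)x(i+1) = 11 or x(i-1)x(i)x(i+1) = 100.
   Two regimes govern its dynamics:
   - a configuration is sparse if every 1 is followed by two 0s; rule 152 acts on sparse
     configurations as the right shift, and sparseness is preserved;
   - if no m+1 consecutive cells are 1 (m >= 2), then after one step no m consecutive cells are 1,
     and once there are no two adjacent 1s the next configuration is sparse.
   If u contains a 0, both p_u and p_u[x] have bounded runs of 1s, hence become sparse after
   finitely many steps; from then on both are shifted, so their difference set (confined to a light
   cone until then) keeps a bounded width: SInv holds for every x.
   If u = 1...1, then p_u is the all-ones fixed point, and a 0 in x produces a left front moving
   left at speed 1 and a right front that stays put: SInv holds iff x consists of 1s only.
   So SInv is either constant or the conjunction of "Alice's part is all 1s" and "Bob's part is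
   all 1s", which a protocol of depth 2 computes for every cut. *)

lemma eca152:
  "eca 152 c i = (c i \<and> c (i+1) \<or> c (i-1) \<and> \<not> c i \<and> \<not> c (i+1))"
  unfolding eca_def local_rule_def
  by (cases "c (i-1)"; cases "c i"; cases "c (i+1)") (simp_all add: bit_iff_odd)

lemma eca_iter_agree_outside:
  assumes "\<forall>i. i < 0 \<or> i \<ge> n \<longrightarrow> c i = d i"
  shows "\<forall>i. i < - int t \<or> i \<ge> n + int t \<longrightarrow> (eca N ^^ t) c i = (eca N ^^ t) d i"
proof (induction t)
  case 0
  then show ?case using assms by simp
next
  case (Suc t)
  show ?case
  proof (intro allI impI)
    fix i assume "i < - int (Suc t) \<or> i \<ge> n + int (Suc t)"
    then have "(eca N ^^ t) c j = (eca N ^^ t) d j" if "j \<in> {i-1, i, i+1}" for j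
      using Suc that by auto
    then show "(eca N ^^ Suc t) c i = (eca N ^^ Suc t) d i"
      by (simp add: eca_def)
  qed
qed

lemma eca_iter_diff_in_cone:
  assumes "\<forall>i. i < 0 \<or> i \<ge> n \<longrightarrow> c i = d i"
  shows "{i. (eca N ^^ t) c i \<noteq> (eca N ^^ t) d i} \<subseteq> {- int t ..< n + int t}"
proof
  fix i assume "i \<in> {i. (eca N ^^ t) c i \<noteq> (eca N ^^ t) d i}"
  then have "\<not> (i < - int t \<or> i \<ge> n + int t)" using eca_iter_agree_outside[OF assms] by blast
  then show "i \<in> {- int t ..< n + int t}" by auto
qed

section \<open>Sparse configurations are shifted\<close>

definition sparse :: "config \<Rightarrow> bool" where
  "sparse c = (\<forall>i. c i \<longrightarrow> \<not> c (i+1) \<and> \<not> c (i+2))"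

lemma sparse_translate: "sparse c \<Longrightarrow> sparse (\<lambda>i. c (i - d))"
  unfolding sparse_def by (metis add_diff_eq diff_add_eq)

lemma eca152_sparse: assumes "sparse c" shows "eca 152 c = (\<lambda>i. c (i-1))"
proof
  fix i
  have "c (i-1) \<longrightarrow> \<not> c i \<and> \<not> c (i+1)"
    using assms unfolding sparse_def by (metis add_diff_cancel_right' diff_add_eq one_add_one add.assoc)
  moreover have "c i \<longrightarrow> \<not> c (i+1)" using assms unfolding sparse_def by blast
  ultimately show "eca 152 c i = c (i-1)" by (auto simp: eca152)
qed

lemma eca152_iter_sparse: "sparse c \<Longrightarrow> (eca 152 ^^ k) c = (\<lambda>i. c (i - int k))"
proof (induction k)
  case 0
  then show ?case by simp
next
  case (Suc k)
  have "(eca 152 ^^ Suc k) c = eca 152 (\<lambda>i. c (i - int k))" using Suc by simp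
  also have "\<dots> = (\<lambda>i. c (i - 1 - int k))"
    using eca152_sparse[OF sparse_translate[OF Suc.prems, of "int k"]] by simp
  finally show ?case by (simp add: algebra_simps)
qed

lemma eca152_bounded_diff:
  assumes agree: "\<forall>i. i < 0 \<or> i \<ge> int n \<longrightarrow> c i = d i"
    and sc: "sparse ((eca 152 ^^ T) c)" and sd: "sparse ((eca 152 ^^ T) d)"
  shows "\<exists>a. {i. (eca 152 ^^ t) c i \<noteq> (eca 152 ^^ t) d i} \<subseteq> {a..a + (int n + 2 * int T)}"
proof (cases "t \<le> T")
  case True
  then have "{i. (eca 152 ^^ t) c i \<noteq> (eca 152 ^^ t) d i} \<subseteq> {- int T .. - int T + (int n + 2 * int T)}"
    using eca_iter_diff_in_cone[OF agree, where t=t and N=152] by auto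
  then show ?thesis by blast
next
  case False
  then obtain k where k: "t = k + T" by (metis le_add_diff_inverse2 nat_le_linear)
  have shifted: "(eca 152 ^^ t) e = (\<lambda>i. (eca 152 ^^ T) e (i - int k))"
    if "sparse ((eca 152 ^^ T) e)" for e
    unfolding k funpow_add o_def using eca152_iter_sparse[OF that] by simp
  have "{i. (eca 152 ^^ t) c i \<noteq> (eca 152 ^^ t) d i}
        \<subseteq> {int k - int T .. int k - int T + (int n + 2 * int T)}"
  proof
    fix i assume "i \<in> {i. (eca 152 ^^ t) c i \<noteq> (eca 152 ^^ t) d i}"
    then have "i - int k \<in> {i. (eca 152 ^^ T) c i \<noteq> (eca 152 ^^ T) d i}"
      using shifted[OF sc] shifted[OF sd] by simp
    then show "i \<in> {int k - int T .. int k - int T + (int n + 2 * int T)}"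
      using eca_iter_diff_in_cone[OF agree, where t=T and N=152] by auto
  qed
  then show ?thesis by blast
qed

section \<open>Bounded runs of ones become sparse\<close>

definition no_run :: "config \<Rightarrow> nat \<Rightarrow> bool" where
  "no_run c m = (\<forall>i. \<exists>j<m. \<not> c (i + int j))"

lemma no_run_mono: "no_run c a \<Longrightarrow> a \<le> b \<Longrightarrow> no_run c b"
  unfolding no_run_def by (meson less_le_trans)

lemma eca152_adjacent_ones:
  "eca 152 c i \<Longrightarrow> eca 152 c (i+1) \<Longrightarrow> c i \<and> c (i+1) \<and> c (i+2)"
  by (auto simp: eca152 algebra_simps)

lemma no_run_step:
  assumes m: "2 \<le> m" and nr: "no_run c (Suc m)"
  shows "no_run (eca 152 c) m"
  unfolding no_run_def
proof
  fix i show "\<exists>j<m. \<not> eca 152 c (i + int j)"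
  proof (rule ccontr)
    assume "\<not> ?thesis"
    then have ones: "\<forall>j<m. eca 152 c (i + int j)" by auto
    have "\<forall>j<Suc m. c (i + int j)"
    proof (intro allI impI)
      fix j assume j: "j < Suc m"
      define j' where "j' = min j (m-2)"
      have "eca 152 c (i + int j')" "eca 152 c (i + int j' + 1)"
        using ones[rule_format, of j'] ones[rule_format, of "j'+1"] j'_def m
        by (simp_all add: algebra_simps)
      then have "c (i + int j') \<and> c (i + int j' + 1) \<and> c (i + int j' + 2)"
        by (rule eca152_adjacent_ones)
      moreover have "int j \<in> {int j', int j' + 1, int j' + 2}" using j m j'_def by auto
      ultimately show "c (i + int j)" by (auto simp: algebra_simps)
    qed
    with nr show False unfolding no_run_def by blast
  qed
qed

lemma no_run_iter: "no_run c (m+2) \<Longrightarrow> no_run ((eca 152 ^^ m) c) 2"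
proof (induction m arbitrary: c)
  case 0
  then show ?case by (simp add: numeral_2_eq_2)
next
  case (Suc m)
  have "no_run (eca 152 c) (m+2)" using no_run_step[of "m+2" c] Suc.prems by simp
  from Suc.IH[OF this] show ?case by (simp only: funpow_Suc_right o_def)
qed

lemma no_run_2_sparse: assumes "no_run c 2" shows "sparse (eca 152 c)"
  unfolding sparse_def
proof (intro allI impI)
  have no_pair: "\<not> (c i \<and> c (i+1))" for i
  proof -
    obtain j where "j < (2::nat)" "\<not> c (i + int j)" using assms unfolding no_run_def by blast
    then show ?thesis by (cases j) auto
  qed
  fix i assume "eca 152 c i"
  then have "c (i-1) \<and> \<not> c i \<and> \<not> c (i+1)" using no_pair[of i] by (auto simp: eca152)
  moreover have "\<not> (c (i+1) \<and> c (i+2))" "\<not> (c (i+2) \<and> c (i+3))"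
    using no_pair[of "i+1"] no_pair[of "i+2"] by (simp_all add: algebra_simps)
  ultimately show "\<not> eca 152 c (i+1) \<and> \<not> eca 152 c (i+2)"
    by (auto simp: eca152 algebra_simps)
qed

lemma eventually_sparse: "no_run c (m+2) \<Longrightarrow> sparse ((eca 152 ^^ Suc m) c)"
  using no_run_2_sparse[OF no_run_iter] by simp

section \<open>The case where u contains a 0\<close>

lemma per_window_has_zero:
  assumes "k < length u" "\<not> u ! k"
  shows "\<exists>i. s \<le> i \<and> i < s + int (length u) \<and> \<not> per u i"
proof -
  let ?L = "int (length u)"
  define i where "i = s + (int k - s) mod ?L"
  have L: "0 < ?L" using assms by auto
  have "s \<le> i" "i < s + ?L" using L unfolding i_def by auto
  moreover have "i mod ?L = int k"
  proof -
    have "i mod ?L = (s + (int k - s)) mod ?L" unfolding i_def by (simp add: mod_add_right_eq)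
    also have "\<dots> = int k" using assms by simp
    finally show ?thesis .
  qed
  ultimately show ?thesis using assms unfolding per_def by auto
qed

lemma no_run_per_patch:
  assumes "k < length u" "\<not> u ! k"
  shows "no_run (per_patch u x) (length x + 2 * length u + 2)"
  unfolding no_run_def
proof
  fix s
  let ?n = "int (length x)" and ?L = "int (length u)"
  have "\<exists>i. s \<le> i \<and> i < s + ?n + 2 * ?L \<and> \<not> per_patch u x i"
  proof (cases "s + ?L \<le> 0 \<or> s \<ge> ?n")
    case True
    obtain i where "s \<le> i" "i < s + ?L" "\<not> per u i" using per_window_has_zero[OF assms] by blast
    with True show ?thesis unfolding per_patch_def by (intro exI[of _ i]) auto
  next
    case False
    obtain i where "?n \<le> i" "i < ?n + ?L" "\<not> per u i" using per_window_has_zero[OF assms] by blast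
    with False show ?thesis unfolding per_patch_def by (intro exI[of _ i]) auto
  qed
  then obtain i where i: "s \<le> i" "i < s + ?n + 2 * ?L" "\<not> per_patch u x i" by blast
  then have "nat (i - s) < length x + 2 * length u + 2" "s + int (nat (i - s)) = i" by auto
  with i(3) show "\<exists>j<length x + 2 * length u + 2. \<not> per_patch u x (s + int j)" by metis
qed

lemma SInv_152_if_zero:
  assumes "k < length u" "\<not> u ! k"
  shows "SInv 152 u x"
proof -
  define m where "m = length x + 2 * length u"
  have "per_patch u [] = per u" unfolding per_patch_def by auto
  then have "no_run (per u) (m + 2)"
    using no_run_mono[OF no_run_per_patch[OF assms, of "[]"]] unfolding m_def by simp
  then have sc: "sparse ((eca 152 ^^ Suc m) (per u))" by (rule eventually_sparse)
  have "no_run (per_patch u x) (m + 2)" using no_run_per_patch[OF assms, of x] unfolding m_def by simp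
  then have sd: "sparse ((eca 152 ^^ Suc m) (per_patch u x))" by (rule eventually_sparse)
  have "\<forall>i. i < 0 \<or> i \<ge> int (length x) \<longrightarrow> per u i = per_patch u x i"
    unfolding per_patch_def by auto
  from eca152_bounded_diff[OF this sc sd] show ?thesis unfolding SInv_def by blast
qed

section \<open>The case u = 1...1\<close>

lemma per_all_ones: "\<forall>b\<in>set u. b \<Longrightarrow> u \<noteq> [] \<Longrightarrow> per u = (\<lambda>_. True)"
proof
  fix i assume "\<forall>b\<in>set u. b" "u \<noteq> []"
  moreover have "nat (i mod int (length u)) < length u" using \<open>u \<noteq> []\<close> by (simp add: nat_less_iff)
  ultimately show "per u i = True" using nth_mem unfolding per_def by blast
qed

lemma eca152_iter_all_ones: "(eca 152 ^^ t) (\<lambda>_. True) = (\<lambda>_. True)"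
  by (induction t) (auto simp: eca152)

lemma eca152_right_front:
  assumes "\<forall>i>q. c i" "\<not> c q"
  shows "(\<forall>i>q. (eca 152 ^^ t) c i) \<and> \<not> (eca 152 ^^ t) c q"
proof (induction t)
  case 0
  then show ?case using assms by simp
next
  case (Suc t)
  let ?d = "(eca 152 ^^ t) c"
  have "\<forall>i>q. ?d i" "\<not> ?d q" using Suc by auto
  then have "\<forall>i>q. eca 152 ?d i" "\<not> eca 152 ?d q" by (auto simp: eca152)
  then show ?case by simp
qed

lemma eca152_left_front:
  assumes "\<forall>i<z. c i" "\<not> c z"
  shows "(\<forall>i < z - int t. (eca 152 ^^ t) c i) \<and> \<not> (eca 152 ^^ t) c (z - int t)"
proof (induction t)
  case 0
  then show ?case using assms by simp
next
  case (Suc t)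
  let ?d = "(eca 152 ^^ t) c"
  have ones: "\<forall>i < z - int t. ?d i" and zero: "\<not> ?d (z - int t)" using Suc by auto
  have "eca 152 ?d i" if "i < z - int (Suc t)" for i
    using ones that by (simp add: eca152)
  moreover have "\<not> eca 152 ?d (z - int (Suc t))"
    using ones zero by (simp add: eca152 algebra_simps)
  ultimately show ?case by simp
qed

text \<open>For u = 1...1, exactly the all-ones patches stay bounded: otherwise the two fronts of
  the 0s in x drift apart.\<close>
lemma SInv_152_all_ones:
  assumes u: "u \<noteq> []" and ones: "\<forall>b\<in>set u. b"
  shows "SInv 152 u x \<longleftrightarrow> (\<forall>b\<in>set x. b)"
proof
  assume x: "\<forall>b\<in>set x. b"
  have "per_patch u x = per u"
  proof
    fix i show "per_patch u x i = per u i"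
      using x per_all_ones[OF ones u] unfolding per_patch_def by auto
  qed
  then show "SInv 152 u x" unfolding SInv_def by auto
next
  assume sinv: "SInv 152 u x"
  show "\<forall>b\<in>set x. b"
  proof (rule ccontr)
    assume "\<not> (\<forall>b\<in>set x. b)"
    then obtain p where p: "p < length x" "\<not> x ! p" by (metis in_set_conv_nth)
    define d where "d = per_patch u x"
    have pu: "per u = (\<lambda>_. True)" using per_all_ones[OF ones u] .
    define S where "S = {i. \<not> d i}"
    have "S \<subseteq> {0..<int (length x)}" unfolding S_def d_def per_patch_def pu by auto
    then have fin: "finite S" using finite_subset by blast
    have ne: "int p \<in> S" unfolding S_def d_def per_patch_def using p by auto
    define z where "z = Min S"
    define q where "q = Max S"
    have "z \<le> q" unfolding z_def q_def using fin ne by (meson Max_ge Min_le order_trans)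
    have "q \<in> S" "z \<in> S" unfolding q_def z_def using fin ne Max_in Min_in by blast+
    then have zeros: "\<not> d q" "\<not> d z" unfolding S_def by auto
    have "\<forall>i>q. d i" using Max_ge[OF fin] unfolding q_def S_def by fastforce
    then have right: "\<not> (eca 152 ^^ t) d q" for t using eca152_right_front zeros(1) by blast
    have "\<forall>i<z. d i" using Min_le[OF fin] unfolding z_def S_def by fastforce
    then have left: "\<not> (eca 152 ^^ t) d (z - int t)" for t using eca152_left_front zeros(2) by blast
    obtain w where "\<forall>t::nat. \<exists>a::int.
        {i. (eca 152 ^^ t) (per u) i \<noteq> (eca 152 ^^ t) d i} \<subseteq> {a..a + w}"
      using sinv unfolding SInv_def d_def by blast
    then obtain a where a: "{i. (eca 152 ^^ Suc (nat w)) (per u) i \<noteq> (eca 152 ^^ Suc (nat w)) d i}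
        \<subseteq> {a..a + w}" by blast
    have "q \<in> {a..a+w}" "z - int (Suc (nat w)) \<in> {a..a+w}"
      using a right[of "Suc (nat w)"] left[of "Suc (nat w)"]
      unfolding pu eca152_iter_all_ones by auto
    then show False using \<open>z \<le> q\<close> by auto
  qed
qed

lemma comm_cc_le_depth:
  "\<forall>x\<in>X. \<forall>y\<in>Y. run P x y = g x y \<Longrightarrow> comm_cc X Y g \<le> depth P"
  unfolding comm_cc_def by (rule Least_le) blast

lemma comm_cc_const: "comm_cc X Y (\<lambda>x y. z) = 0"
proof -
  have "\<forall>x\<in>X. \<forall>y\<in>Y. run (Leaf z) x y = z" by simp
  from comm_cc_le_depth[OF this] show ?thesis by simp
qed

lemma comm_cc_conj: "comm_cc X Y (\<lambda>x y. A x \<and> B y) \<le> 2"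
proof -
  define P :: "('a, 'b, bool) protocol" where
    "P = AliceNode A (Leaf False) (BobNode B (Leaf False) (Leaf True))"
  have "\<forall>x\<in>X. \<forall>y\<in>Y. run P x y = (A x \<and> B y)" unfolding P_def by simp
  from comm_cc_le_depth[OF this] show ?thesis unfolding P_def by simp
qed

lemma comm_cc_word_le:
  "(\<And>i. i < m \<Longrightarrow> comm_cc (words i) (words (m-i)) (\<lambda>x y. g (x@y)) \<le> C) \<Longrightarrow> comm_cc_word m g \<le> C"
  unfolding comm_cc_word_def by (subst Max_le_iff) auto

theorem mainTheorem18:
  fixes u :: "bool list"
  assumes "u \<noteq> []"
  shows "\<exists>C::nat. \<forall>n::nat. comm_cc_word n (SInv 152 u) \<le> C"
proof (intro exI allI)
  fix n
  show "comm_cc_word n (SInv 152 u) \<le> 2"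
  proof (rule comm_cc_word_le)
    fix i
    show "comm_cc (words i) (words (n-i)) (\<lambda>x y. SInv 152 u (x@y)) \<le> 2"
    proof (cases "\<forall>b\<in>set u. b")
      case True
      then have "(\<lambda>x y. SInv 152 u (x@y)) = (\<lambda>x y. (\<forall>b\<in>set x. b) \<and> (\<forall>b\<in>set y. b))"
        using SInv_152_all_ones[OF assms] by auto
      then show ?thesis by (simp only: comm_cc_conj)
    next
      case False
      then obtain k where "k < length u" "\<not> u ! k" by (metis in_set_conv_nth)
      then have "(\<lambda>x y. SInv 152 u (x@y)) = (\<lambda>x y. True)" using SInv_152_if_zero by blast
      then show ?thesis by (simp only: comm_cc_const zero_le)
    qed
  qed
qed

end
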